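(* In any execution of Algorithm $\mathsf{AG}$ (described in the context) with a guild, there exists a process $p_i$ in the maximal guild such that the set $S_i$ that $p_i$ sent in its $\mathrm{DistributeS}$ message is, after the execution of the algorithm, contained in the set $U_k$ of every process $p_k$ in the maximal guild.
   Context: System model: a finite set $\mathcal{P}=\{p_1,\dots,p_n\}$ of processes communicating asynchronously over authenticated point-to-point links; every message sent from a correct process to a correct process is eventually delivered. A process that follows its protocol is correct; others (faulty, Byzantine) may behave arbitrarily. $F\subseteq\mathcal{P}$ denotes the (unknown) set of faulty processes of an execution. For $\mathcal{A}\subseteq 2^{\mathcal{P}}$, write $\mathcal{A}^*=\{A' : A'\subseteq A,\ A\in\mathcal{A}\}$. An asymmetric fail-prone system is an array $\mathbb{F}=[\mathcal{F}_1,\dots,\mathcal{F}_n]$ with $\mathcal{F}_i\subseteq 2^{\mathcal{P}}$. An asymmetric Byzantine quorum system for $\mathbb{F}$ is an array $\mathbb{Q}=[\mathcal{Q}_1,\dots,\mathcal{Q}_n]$ with $\mathcal{Q}_i\subseteq 2^{\mathcal{P}}$ (quorums for $p_i$) satisfying: (consistency) for all $i,j$, all $Q_i\in\mathcal{Q}_i$, $Q_j\in\mathcal{Q}_j$, $F_{ij}\in\mathcal{F}_i^*\cap\mathcal{F}_j^*$: $Q_i\cap Q_j\not\subseteq F_{ij}$; (availability) for all $i$ and $F_i\in\mathcal{F}_i$ there is $Q_i\in\mathcal{Q}_i$ with $F_i\cap Q_i=\emptyset$. A kernel for $p_i$ is a set $K\subseteq\mathcal{P}$ intersecting every $Q\in\mathcal{Q}_i$;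 $\mathcal{K}_i$ is the set of kernels for $p_i$. A correct process $p_i$ is wise if $F\in\mathcal{F}_i^*$. A guild is a set $\mathcal{G}$ of wise processes such that every $p_i\in\mathcal{G}$ has some $Q_i\in\mathcal{Q}_i$ with $Q_i\subseteq\mathcal{G}$. An execution with a guild is one in which a nonempty guild exists; the maximal guild $\mathcal{G}_{max}$ is the union of all guilds. Asymmetric reliable broadcast (arb-broadcast / arb-deliver) guarantees, in every execution with a guild: if a correct process arb-broadcasts $m$, every process of $\mathcal{G}_{max}$ eventually arb-delivers $m$; for each sender, all processes of $\mathcal{G}_{max}$ that arb-deliver from it deliver the same message; if some process of $\mathcal{G}_{max}$ arb-delivers a message from a sender, all processes of $\mathcal{G}_{max}$ eventually arb-deliver a message from that sender; a correct process arb-delivers at most one message per sender, and from a correct sender only a message it arb-broadcast. Algorithm $\mathsf{AG}$ (code of $p_i$; each correct process invokes ag-propose$(x_i)$ exactly once; each guarded "upon there being ..." action executes at most once, message handlers once per message). State: sets $S_i,T_i,U_i$ initially empty, boolean $sentT$ initially false. (1) Upon ag-propose$(x_i)$: arb-broadcast $(p_i,x_i)$. (2) Upon arb-delivering $(p_j,x_j)$ from $p_j$: $S_i\gets S_i\cup\{(p_j,x_j)\}$. (3) Upon there being $Q\in\mathcal{Q}_i$ such that for every $p_j\in Q$ some pair $(p_j,\cdot)\in S_i$: send $\langle\mathrm{DistributeS},p_i,S_i\rangle$ to all. (4) For a received $\langle\mathrm{DistributeS},p_j,S_j\rangle$: once $S_j\subseteq S_i$, provided $sentT$ is false at that moment,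 set $T_i\gets T_i\cup S_j$ and send $\langle\mathrm{Ack},p_i\rangle$ to $p_j$. (5) Upon Ack received from every member of some $Q\in\mathcal{Q}_i$: send Ready to all. (6) Upon Ready received from every member of some $Q\in\mathcal{Q}_i$: send Confirm to all. (7) Upon Confirm received from every member of some $K\in\mathcal{K}_i$: send Confirm to all. (8) Upon Confirm received from every member of some $Q\in\mathcal{Q}_i$: send $\langle\mathrm{DistributeT},p_i,T_i\rangle$ to all and set $sentT\gets$ true. (9) For a received $\langle\mathrm{DistributeT},p_j,T_j\rangle$ from $p_j$: once $T_j\subseteq S_i$, set $U_i\gets U_i\cup T_j$. (10) Upon DistributeT received from every member of some $Q\in\mathcal{Q}_i$: ag-deliver$(U_i)$. *)

theory Defs
  imports Main
begin

text \<open>Processes are the elements of a (finite) type 'p; the process set P is UNIV.\<close>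

definition dstar :: "'a set set \<Rightarrow> 'a set set" where
  "dstar A = {A'. \<exists>B\<in>A. A' \<subseteq> B}"

definition asym_quorum_system :: "('p \<Rightarrow> 'p set set) \<Rightarrow> ('p \<Rightarrow> 'p set set) \<Rightarrow> bool" where
  "asym_quorum_system Fp Qs \<longleftrightarrow>
     (\<forall>i j. \<forall>Qi\<in>Qs i. \<forall>Qj\<in>Qs j. \<forall>Fij\<in>dstar (Fp i) \<inter> dstar (Fp j). \<not> (Qi \<inter> Qj \<subseteq> Fij)) \<and>
     (\<forall>i. \<forall>Fi\<in>Fp i. \<exists>Qi\<in>Qs i. Fi \<inter> Qi = {})"

definition is_kernel :: "('p \<Rightarrow> 'p set set) \<Rightarrow> 'p \<Rightarrow> 'p set \<Rightarrow> bool" where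
  "is_kernel Qs i K \<longleftrightarrow> (\<forall>Q\<in>Qs i. K \<inter> Q \<noteq> {})"

definition wise :: "('p \<Rightarrow> 'p set set) \<Rightarrow> 'p set \<Rightarrow> 'p \<Rightarrow> bool" where
  "wise Fp F i \<longleftrightarrow> i \<notin> F \<and> F \<in> dstar (Fp i)"

definition guild :: "('p \<Rightarrow> 'p set set) \<Rightarrow> ('p \<Rightarrow> 'p set set) \<Rightarrow> 'p set \<Rightarrow> 'p set \<Rightarrow> bool" where
  "guild Fp Qs F G \<longleftrightarrow> (\<forall>i\<in>G. wise Fp F i) \<and> (\<forall>i\<in>G. \<exists>Q\<in>Qs i. Q \<subseteq> G)"

definition Gmax :: "('p \<Rightarrow> 'p set set) \<Rightarrow> ('p \<Rightarrow> 'p set set) \<Rightarrow> 'p set \<Rightarrow> 'p set" where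
  "Gmax Fp Qs F = \<Union>{G. guild Fp Qs F G}"

definition exec_with_guild :: "('p \<Rightarrow> 'p set set) \<Rightarrow> ('p \<Rightarrow> 'p set set) \<Rightarrow> 'p set \<Rightarrow> bool" where
  "exec_with_guild Fp Qs F \<longleftrightarrow> (\<exists>G. guild Fp Qs F G \<and> G \<noteq> {})"

datatype ('p,'v) msg = DistS "('p \<times> 'v) set" | Ack | Ready | Confirm | DistT "('p \<times> 'v) set"

text \<open>Local state of a correct process. ls_sentS records whether (and with which set S_i)
  action (3) was executed; ls_done5/6/7 record execution of guarded actions (5),(6),(7);
  ls_sentT is the variable sentT (and records action (8)); ls_out records ag-deliver (10).
  ls_pendS / ls_pendT hold received DistributeS / DistributeT messages (sender, set)
  whose handler (4) / (9) is still waiting for its condition.\<close>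

record ('p,'v) lstate =
  ls_prop :: bool
  ls_S :: "('p \<times> 'v) set"
  ls_T :: "('p \<times> 'v) set"
  ls_U :: "('p \<times> 'v) set"
  ls_sentT :: bool
  ls_sentS :: "('p \<times> 'v) set option"
  ls_pendS :: "('p \<times> ('p \<times> 'v) set) set"
  ls_pendT :: "('p \<times> ('p \<times> 'v) set) set"
  ls_acks :: "'p set"
  ls_readys :: "'p set"
  ls_confs :: "'p set"
  ls_dts :: "'p set"
  ls_done5 :: bool
  ls_done6 :: bool
  ls_done7 :: bool
  ls_out :: "('p \<times> 'v) set option"

text \<open>Global state: local states and the set of in-transit messages (source, destination, message).\<close>
record ('p,'v) gstate =
  g_loc :: "'p \<Rightarrow> ('p,'v) lstate"
  g_net :: "('p \<times> 'p \<times> ('p,'v) msg) set"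

definition init_l :: "('p,'v) lstate" where
  "init_l = \<lparr>ls_prop = False, ls_S = {}, ls_T = {}, ls_U = {}, ls_sentT = False, ls_sentS = None,
     ls_pendS = {}, ls_pendT = {}, ls_acks = {}, ls_readys = {}, ls_confs = {}, ls_dts = {},
     ls_done5 = False, ls_done6 = False, ls_done7 = False, ls_out = None\<rparr>"

definition init_g :: "('p,'v) gstate" where
  "init_g = \<lparr>g_loc = (\<lambda>_. init_l), g_net = {}\<rparr>"

definition covered :: "('p \<Rightarrow> 'p set set) \<Rightarrow> 'p \<Rightarrow> 'p set \<Rightarrow> bool" where
  "covered Qs i A \<longleftrightarrow> (\<exists>Q\<in>Qs i. Q \<subseteq> A)"

definition to_all :: "('p,'v) msg \<Rightarrow> ('p \<times> ('p,'v) msg) set" where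
  "to_all m = UNIV \<times> {m}"

text \<open>Guarded actions (3),(5),(6),(7),(8),(10) fire immediately (each at most once)
  as soon as their condition holds.  None of them changes the condition of another,
  so they are applied simultaneously after every local event.\<close>

definition settle_st :: "('p \<Rightarrow> 'p set set) \<Rightarrow> 'p \<Rightarrow> ('p,'v) lstate \<Rightarrow> ('p,'v) lstate" where
  "settle_st Qs i s = s\<lparr>
     ls_sentS := (if ls_sentS s = None \<and> covered Qs i (fst ` ls_S s) then Some (ls_S s) else ls_sentS s),
     ls_done5 := (ls_done5 s \<or> covered Qs i (ls_acks s)),
     ls_done6 := (ls_done6 s \<or> covered Qs i (ls_readys s)),
     ls_done7 := (ls_done7 s \<or> (\<exists>K. is_kernel Qs i K \<and> K \<subseteq> ls_confs s)),
     ls_sentT := (ls_sentT s \<or> covered Qs i (ls_confs s)),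
     ls_out := (if ls_out s = None \<and> covered Qs i (ls_dts s) then Some (ls_U s) else ls_out s)\<rparr>"

definition settle_out :: "('p \<Rightarrow> 'p set set) \<Rightarrow> 'p \<Rightarrow> ('p,'v) lstate \<Rightarrow> ('p \<times> ('p,'v) msg) set" where
  "settle_out Qs i s =
     (if ls_sentS s = None \<and> covered Qs i (fst ` ls_S s) then to_all (DistS (ls_S s)) else {}) \<union>
     (if \<not> ls_done5 s \<and> covered Qs i (ls_acks s) then to_all Ready else {}) \<union>
     (if \<not> ls_done6 s \<and> covered Qs i (ls_readys s) then to_all Confirm else {}) \<union>
     (if \<not> ls_done7 s \<and> (\<exists>K. is_kernel Qs i K \<and> K \<subseteq> ls_confs s) then to_all Confirm else {}) \<union>
     (if \<not> ls_sentT s \<and> covered Qs i (ls_confs s) then to_all (DistT (ls_T s)) else {})"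

text \<open>Receipt of a point-to-point message m from (authenticated) sender j:
  handlers (4) and (9) fire immediately if their condition already holds, otherwise
  they wait in ls_pendS / ls_pendT.\<close>

definition recv_local :: "'p \<Rightarrow> ('p,'v) msg \<Rightarrow> ('p,'v) lstate \<Rightarrow> ('p,'v) lstate \<times> ('p \<times> ('p,'v) msg) set" where
  "recv_local j m s = (case m of
      DistS X \<Rightarrow>
        (if X \<subseteq> ls_S s then
           (if \<not> ls_sentT s then (s\<lparr>ls_T := ls_T s \<union> X\<rparr>, {(j, Ack)}) else (s, {}))
         else (s\<lparr>ls_pendS := insert (j, X) (ls_pendS s)\<rparr>, {}))
    | Ack \<Rightarrow> (s\<lparr>ls_acks := insert j (ls_acks s)\<rparr>, {})
    | Ready \<Rightarrow> (s\<lparr>ls_readys := insert j (ls_readys s)\<rparr>, {})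
    | Confirm \<Rightarrow> (s\<lparr>ls_confs := insert j (ls_confs s)\<rparr>, {})
    | DistT X \<Rightarrow>
        (if X \<subseteq> ls_S s then (s\<lparr>ls_dts := insert j (ls_dts s), ls_U := ls_U s \<union> X\<rparr>, {})
         else (s\<lparr>ls_dts := insert j (ls_dts s), ls_pendT := insert (j, X) (ls_pendT s)\<rparr>, {})))"

text \<open>arb-delivery of value x from sender j (action (2)); waiting handlers (4),(9)
  whose condition becomes true fire at that moment.\<close>

definition arbdel_local :: "'p \<Rightarrow> 'v \<Rightarrow> ('p,'v) lstate \<Rightarrow> ('p,'v) lstate \<times> ('p \<times> ('p,'v) msg) set" where
  "arbdel_local j x s =
     (let S' = insert (j, x) (ls_S s);
          RS = {p \<in> ls_pendS s. snd p \<subseteq> S'};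
          RT = {p \<in> ls_pendT s. snd p \<subseteq> S'}
      in (s\<lparr>ls_S := S', ls_pendS := ls_pendS s - RS, ls_pendT := ls_pendT s - RT,
            ls_T := (if ls_sentT s then ls_T s else ls_T s \<union> \<Union>(snd ` RS)),
            ls_U := ls_U s \<union> \<Union>(snd ` RT)\<rparr>,
          (if ls_sentT s then {} else {(k, Ack) | k. k \<in> fst ` RS})))"

definition do_local :: "('p \<Rightarrow> 'p set set) \<Rightarrow> 'p \<Rightarrow> ('p,'v) gstate
    \<Rightarrow> ('p,'v) lstate \<times> ('p \<times> ('p,'v) msg) set \<Rightarrow> ('p,'v) gstate" where
  "do_local Qs i \<sigma> r =
     (let s1 = fst r; out = snd r \<union> settle_out Qs i s1
      in \<sigma>\<lparr>g_loc := (g_loc \<sigma>)(i := settle_st Qs i s1),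
          g_net := g_net \<sigma> \<union> {(i, d, m) | d m. (d, m) \<in> out}\<rparr>)"

datatype ('p,'v) label =
    Propose 'p                          \<comment> \<open>ag-propose at p (arb-broadcasts its input)\<close>
  | ArbDeliver 'p 'p 'v                 \<comment> \<open>receiver, sender, value\<close>
  | Receive 'p 'p "('p,'v) msg"         \<comment> \<open>source, destination, message\<close>
  | ByzReceive 'p 'p "('p,'v) msg"      \<comment> \<open>faulty source sends arbitrary message to destination\<close>
  | Idle

definition ag_step :: "('p \<Rightarrow> 'p set set) \<Rightarrow> 'p set \<Rightarrow> ('p \<Rightarrow> 'v)
    \<Rightarrow> ('p,'v) gstate \<Rightarrow> ('p,'v) label \<Rightarrow> ('p,'v) gstate \<Rightarrow> bool" where
  "ag_step Qs F inp \<sigma> a \<sigma>' = (case a of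
      Propose i \<Rightarrow> i \<notin> F \<and> \<not> ls_prop (g_loc \<sigma> i)
         \<and> \<sigma>' = do_local Qs i \<sigma> ((g_loc \<sigma> i)\<lparr>ls_prop := True\<rparr>, {})
    | ArbDeliver i j x \<Rightarrow> i \<notin> F \<and> (\<forall>y. (j, y) \<notin> ls_S (g_loc \<sigma> i))
         \<and> (j \<notin> F \<longrightarrow> ls_prop (g_loc \<sigma> j) \<and> x = inp j)
         \<and> \<sigma>' = do_local Qs i \<sigma> (arbdel_local j x (g_loc \<sigma> i))
    | Receive j i m \<Rightarrow> i \<notin> F \<and> (j, i, m) \<in> g_net \<sigma>
         \<and> \<sigma>' = do_local Qs i (\<sigma>\<lparr>g_net := g_net \<sigma> - {(j, i, m)}\<rparr>) (recv_local j m (g_loc \<sigma> i))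
    | ByzReceive j i m \<Rightarrow> j \<in> F \<and> i \<notin> F
         \<and> \<sigma>' = do_local Qs i \<sigma> (recv_local j m (g_loc \<sigma> i))
    | Idle \<Rightarrow> \<sigma>' = \<sigma>)"

text \<open>An execution of AG with faulty set F and inputs inp: an infinite run of ag_step from
  the initial state, in which every correct process eventually proposes, every message
  between correct processes is eventually delivered, and the arb-delivery events satisfy
  the asymmetric reliable broadcast specification w.r.t. the maximal guild
  (integrity and at-most-once are enforced by the step relation).\<close>

definition AG_execution :: "('p \<Rightarrow> 'p set set) \<Rightarrow> ('p \<Rightarrow> 'p set set) \<Rightarrow> 'p set \<Rightarrow> ('p \<Rightarrow> 'v)
    \<Rightarrow> (nat \<Rightarrow> ('p,'v) gstate) \<Rightarrow> (nat \<Rightarrow> ('p,'v) label) \<Rightarrow> bool" where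
  "AG_execution Fp Qs F inp \<sigma> lab \<longleftrightarrow>
     \<sigma> 0 = init_g \<and>
     (\<forall>t. ag_step Qs F inp (\<sigma> t) (lab t) (\<sigma> (Suc t))) \<and>
     (\<forall>i. i \<notin> F \<longrightarrow> (\<exists>t. lab t = Propose i)) \<and>
     (\<forall>t j i m. (j, i, m) \<in> g_net (\<sigma> t) \<and> i \<notin> F \<longrightarrow> (\<exists>t'\<ge>t. lab t' = Receive j i m)) \<and>
     (\<forall>j k t. j \<notin> F \<and> ls_prop (g_loc (\<sigma> t) j) \<and> k \<in> Gmax Fp Qs F
        \<longrightarrow> (\<exists>t'. (j, inp j) \<in> ls_S (g_loc (\<sigma> t') k))) \<and>
     (\<forall>j i k t t' x y. i \<in> Gmax Fp Qs F \<and> k \<in> Gmax Fp Qs F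
        \<and> (j, x) \<in> ls_S (g_loc (\<sigma> t) i) \<and> (j, y) \<in> ls_S (g_loc (\<sigma> t') k) \<longrightarrow> x = y) \<and>
     (\<forall>j i t x. i \<in> Gmax Fp Qs F \<and> (j, x) \<in> ls_S (g_loc (\<sigma> t) i)
        \<longrightarrow> (\<forall>k\<in>Gmax Fp Qs F. \<exists>t' y. (j, y) \<in> ls_S (g_loc (\<sigma> t') k)))"

end

theory Submission
  imports Defs
begin

text \<open>
  Some guild member p_i sends Ready, i.e. it has received Acks for its DistributeS set S_i from
  a quorum Q_i. To see this, take the first guild member p_c to confirm: had it confirmed on a
  kernel of Confirms, the kernel would meet a quorum of p_c inside the guild in a guild member
  that confirmed even earlier; so it confirmed on a quorum of Readys, which meets that quorum in
  a correct guild member that had sent Ready. A correct process acknowledges S_i only by adding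
  it to its set T, which is frozen once it sends DistributeT.

  Every guild member eventually sends DistributeT: if none did, all guild members would
  acknowledge each other and pass through Ready and Confirm to DistributeT; once one did, the
  correct part of its quorum of Confirms is a kernel for every wise process, so all guild
  members confirm and then send DistributeT.

  Finally, for a guild member p_k, a quorum of p_k inside the guild meets Q_i in a correct guild
  member p_j. Its DistributeT set T_j contains S_i and reaches p_k; since T_j is part of S_j,
  reliable broadcast eventually puts T_j into S_k, and then p_k adds T_j to U_k.
\<close>

lemma ex_first_change_nat:
  assumes "\<not> P 0" "P n"
  shows "\<exists>m<n. \<not> P m \<and> P (Suc m)"
  using assms(2)
proof (induction n)
  case 0 with assms(1) show ?case by simp
next
  case (Suc n) then show ?case by (cases "P n") (auto intro: less_SucI)
qed

lemma ex_common_time_mono: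
  fixes P :: "'a \<Rightarrow> nat \<Rightarrow> bool"
  assumes "finite A" "\<And>x. x \<in> A \<Longrightarrow> \<exists>n. P x n" "\<And>x m n. P x m \<Longrightarrow> m \<le> n \<Longrightarrow> P x n"
  shows "\<exists>n. \<forall>x\<in>A. P x n"
proof -
  have "eventually (\<lambda>n. P x n) sequentially" if "x \<in> A" for x
    using assms(2)[OF that] assms(3) unfolding eventually_sequentially by blast
  then have "eventually (\<lambda>n. \<forall>x\<in>A. P x n) sequentially"
    by (intro eventually_ball_finite assms(1) ballI)
  then show ?thesis
    unfolding eventually_sequentially by blast
qed

section \<open>Quorums and guilds\<close>

lemma guild_Gmax: "guild Fp Qs F (Gmax Fp Qs F)"
proof -
  have "wise Fp F i \<and> (\<exists>Q\<in>Qs i. Q \<subseteq> Gmax Fp Qs F)" if i: "i \<in> Gmax Fp Qs F" for i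
  proof -
    obtain G where G: "guild Fp Qs F G" "i \<in> G"
      using i unfolding Gmax_def by auto
    then have "G \<subseteq> Gmax Fp Qs F"
      unfolding Gmax_def by auto
    with G show ?thesis
      unfolding guild_def by (meson subset_trans)
  qed
  then show ?thesis
    unfolding guild_def by simp
qed

lemma wise_quorums_meet_correct:
  assumes "asym_quorum_system Fp Qs" "wise Fp F a" "wise Fp F b" "Q \<in> Qs a" "Q' \<in> Qs b"
  obtains p where "p \<in> Q" "p \<in> Q'" "p \<notin> F"
proof -
  have "F \<in> dstar (Fp a) \<inter> dstar (Fp b)"
    using assms(2,3) by (simp add: wise_def)
  then have "\<not> Q \<inter> Q' \<subseteq> F"
    using assms(1,4,5) unfolding asym_quorum_system_def by blast
  then show thesis using that by blast
qed

lemma wise_quorum_correct_part_is_kernel: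
  assumes "asym_quorum_system Fp Qs" "wise Fp F x" "wise Fp F k" "Q \<in> Qs x"
  shows "is_kernel Qs k (Q - F)"
  unfolding is_kernel_def
proof
  fix Q' assume "Q' \<in> Qs k"
  with assms obtain p where "p \<in> Q" "p \<in> Q'" "p \<notin> F"
    by (blast elim: wise_quorums_meet_correct)
  then show "(Q - F) \<inter> Q' \<noteq> {}" by blast
qed

section \<open>Local states\<close>

definition lstate_le :: "('p,'v) lstate \<Rightarrow> ('p,'v) lstate \<Rightarrow> bool" where
  "lstate_le a b \<longleftrightarrow> ls_S a \<subseteq> ls_S b \<and> ls_T a \<subseteq> ls_T b \<and> ls_U a \<subseteq> ls_U b \<and>
    ls_acks a \<subseteq> ls_acks b \<and> ls_readys a \<subseteq> ls_readys b \<and> ls_confs a \<subseteq> ls_confs b \<and>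
    (ls_sentS a \<noteq> None \<longrightarrow> ls_sentS b = ls_sentS a) \<and>
    (ls_sentT a \<longrightarrow> ls_sentT b \<and> ls_T b = ls_T a) \<and>
    (ls_done5 a \<longrightarrow> ls_done5 b) \<and> (ls_done6 a \<longrightarrow> ls_done6 b) \<and> (ls_done7 a \<longrightarrow> ls_done7 b)"

lemma lstate_le_refl: "lstate_le a a"
  by (simp add: lstate_le_def)

lemma lstate_le_trans: "lstate_le a b \<Longrightarrow> lstate_le b c \<Longrightarrow> lstate_le a c"
  unfolding lstate_le_def by (smt (verit) order_trans)

lemma lstate_leD:
  assumes "lstate_le a b"
  shows "ls_T a \<subseteq> ls_T b"
    and "ls_sentS a = Some X \<Longrightarrow> ls_sentS b = Some X"
    and "ls_sentT a \<Longrightarrow> ls_T b = ls_T a"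
    and "ls_done5 a \<Longrightarrow> ls_done5 b"
    and "ls_done6 a \<or> ls_done7 a \<Longrightarrow> ls_done6 b \<or> ls_done7 b"
  using assms by (auto simp: lstate_le_def)

lemma lstate_le_settle_st: "lstate_le s (settle_st Qs i s)"
  by (auto simp: lstate_le_def settle_st_def)

lemma settle_st_idem: "settle_st Qs i (settle_st Qs i s) = settle_st Qs i s"
  by (simp add: settle_st_def)

lemma settle_st_sel [simp]:
  "ls_prop (settle_st Qs i s) = ls_prop s" "ls_S (settle_st Qs i s) = ls_S s"
  "ls_T (settle_st Qs i s) = ls_T s" "ls_U (settle_st Qs i s) = ls_U s"
  "ls_pendS (settle_st Qs i s) = ls_pendS s" "ls_pendT (settle_st Qs i s) = ls_pendT s"
  "ls_acks (settle_st Qs i s) = ls_acks s" "ls_readys (settle_st Qs i s) = ls_readys s"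
  "ls_confs (settle_st Qs i s) = ls_confs s"
  by (simp_all add: settle_st_def)

lemma settle_out_content:
  assumes "(d, m) \<in> settle_out Qs i s"
  shows "\<And>X. m = DistS X \<Longrightarrow> ls_sentS (settle_st Qs i s) = Some X"
    and "m \<noteq> Ack"
    and "m = Ready \<Longrightarrow> ls_done5 (settle_st Qs i s)"
    and "m = Confirm \<Longrightarrow> ls_done6 (settle_st Qs i s) \<or> ls_done7 (settle_st Qs i s)"
  using assms by (auto simp: settle_out_def settle_st_def to_all_def split: if_splits)

lemma settle_out_broadcasts:
  shows "ls_sentS s = None \<Longrightarrow> ls_sentS (settle_st Qs i s) = Some X \<Longrightarrow>
      (d, DistS X) \<in> settle_out Qs i s"
    and "\<not> ls_done5 s \<Longrightarrow> ls_done5 (settle_st Qs i s) \<Longrightarrow> (d, Ready) \<in> settle_out Qs i s"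
    and "\<not> (ls_done6 s \<or> ls_done7 s) \<Longrightarrow> ls_done6 (settle_st Qs i s) \<or> ls_done7 (settle_st Qs i s) \<Longrightarrow>
      (d, Confirm) \<in> settle_out Qs i s"
    and "\<not> ls_sentT s \<Longrightarrow> ls_sentT (settle_st Qs i s) \<Longrightarrow> (d, DistT (ls_T s)) \<in> settle_out Qs i s"
  by (auto simp: settle_st_def settle_out_def to_all_def split: if_splits)

lemma covered_mono: "covered Qs i A \<Longrightarrow> A \<subseteq> B \<Longrightarrow> covered Qs i B"
  by (auto simp: covered_def)

definition local_inv :: "('p \<Rightarrow> 'p set set) \<Rightarrow> 'p \<Rightarrow> ('p,'v) lstate \<Rightarrow> bool" where
  "local_inv Qs i s \<longleftrightarrow> ls_T s \<subseteq> ls_S s \<and> (\<forall>X. ls_sentS s = Some X \<longrightarrow> X \<subseteq> ls_S s) \<and>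
     (\<forall>j X. (j, X) \<in> ls_pendS s \<longrightarrow> \<not> X \<subseteq> ls_S s) \<and>
     (\<forall>j X. (j, X) \<in> ls_pendT s \<longrightarrow> \<not> X \<subseteq> ls_S s) \<and>
     (ls_done5 s \<longrightarrow> covered Qs i (ls_acks s)) \<and> (ls_done6 s \<longrightarrow> covered Qs i (ls_readys s)) \<and>
     (ls_done7 s \<longrightarrow> (\<exists>K. is_kernel Qs i K \<and> K \<subseteq> ls_confs s)) \<and>
     (ls_sentT s \<longrightarrow> covered Qs i (ls_confs s))"

lemma local_inv_init: "local_inv Qs i init_l"
  by (simp add: local_inv_def init_l_def)

lemma local_inv_settle_st: "local_inv Qs i s \<Longrightarrow> local_inv Qs i (settle_st Qs i s)"
  by (auto simp: local_inv_def settle_st_def)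

definition sent_from :: "'p \<Rightarrow> ('p \<times> ('p,'v) msg) set \<Rightarrow> ('p \<times> 'p \<times> ('p,'v) msg) set" where
  "sent_from i out = {(i, d, m) | d m. (d, m) \<in> out}"

lemma mem_sent_from [simp]: "(j, d, m) \<in> sent_from i out \<longleftrightarrow> j = i \<and> (d, m) \<in> out"
  by (simp add: sent_from_def)

lemma sent_from_Un [simp]: "sent_from i (A \<union> B) = sent_from i A \<union> sent_from i B"
  by (auto simp: sent_from_def)

text \<open>A proposal, arb-delivery or receipt at the correct process i turns its local state s
  into ls and emits the point-to-point messages out, before the guarded actions fire;
  N is the network at that moment.\<close>

definition local_event :: "'p set \<Rightarrow> ('p \<times> 'p \<times> ('p,'v) msg) set \<Rightarrow> 'p \<Rightarrow> ('p,'v) lstate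
    \<Rightarrow> ('p,'v) lstate \<Rightarrow> ('p \<times> ('p,'v) msg) set \<Rightarrow> bool" where
  "local_event F N i s ls out \<longleftrightarrow>
     lstate_le s ls \<and>
     ls_sentS ls = ls_sentS s \<and> ls_done5 ls = ls_done5 s \<and> ls_done6 ls = ls_done6 s \<and>
     ls_done7 ls = ls_done7 s \<and> ls_sentT ls = ls_sentT s \<and>
     (\<forall>j X. (j, X) \<in> ls_pendT s \<longrightarrow> (j, X) \<in> ls_pendT ls \<or> X \<subseteq> ls_U ls) \<and>
     (\<not> ls_sentT s \<longrightarrow> (\<forall>j X. (j, X) \<in> ls_pendS s \<longrightarrow> (j, X) \<in> ls_pendS ls \<or> (j, Ack) \<in> out)) \<and>
     (\<forall>j X. (j, X) \<in> ls_pendS ls \<longrightarrow> (j, X) \<in> ls_pendS s \<or> (j, i, DistS X) \<in> N \<or> j \<in> F) \<and>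
     (\<forall>j. j \<in> ls_acks ls \<longrightarrow> j \<in> ls_acks s \<or> (j, i, Ack) \<in> N \<or> j \<in> F) \<and>
     (\<forall>j. j \<in> ls_readys ls \<longrightarrow> j \<in> ls_readys s \<or> (j, i, Ready) \<in> N \<or> j \<in> F) \<and>
     (\<forall>j. j \<in> ls_confs ls \<longrightarrow> j \<in> ls_confs s \<or> (j, i, Confirm) \<in> N \<or> j \<in> F) \<and>
     (\<forall>d m. (d, m) \<in> out \<longrightarrow> m = Ack \<and>
        (\<exists>X. X \<subseteq> ls_T ls \<and> ((d, X) \<in> ls_pendS s \<or> (d, i, DistS X) \<in> N \<or> d \<in> F)))"

lemma local_eventD:
  assumes "local_event F N i s ls out"
  shows "lstate_le s ls"
    and "ls_sentS ls = ls_sentS s" "ls_done5 ls = ls_done5 s" "ls_done6 ls = ls_done6 s"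
      "ls_done7 ls = ls_done7 s" "ls_sentT ls = ls_sentT s"
    and "(j, X) \<in> ls_pendT s \<Longrightarrow> (j, X) \<in> ls_pendT ls \<or> X \<subseteq> ls_U ls"
    and "\<not> ls_sentT s \<Longrightarrow> (j, X) \<in> ls_pendS s \<Longrightarrow> (j, X) \<in> ls_pendS ls \<or> (j, Ack) \<in> out"
    and "(j, X) \<in> ls_pendS ls \<Longrightarrow> (j, X) \<in> ls_pendS s \<or> (j, i, DistS X) \<in> N \<or> j \<in> F"
    and "j \<in> ls_acks ls \<Longrightarrow> j \<in> ls_acks s \<or> (j, i, Ack) \<in> N \<or> j \<in> F"
    and "j \<in> ls_readys ls \<Longrightarrow> j \<in> ls_readys s \<or> (j, i, Ready) \<in> N \<or> j \<in> F"
    and "j \<in> ls_confs ls \<Longrightarrow> j \<in> ls_confs s \<or> (j, i, Confirm) \<in> N \<or> j \<in> F"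
    and "(d, m) \<in> out \<Longrightarrow> m = Ack \<and>
      (\<exists>X. X \<subseteq> ls_T ls \<and> ((d, X) \<in> ls_pendS s \<or> (d, i, DistS X) \<in> N \<or> d \<in> F))"
  using assms by (simp_all add: local_event_def)
lemma local_event_propose: "local_event F N i s (s\<lparr>ls_prop := True\<rparr>) {}"
  by (simp add: local_event_def lstate_le_def)

lemma local_event_arbdel: "local_event F N i s (fst (arbdel_local j x s)) (snd (arbdel_local j x s))"
  unfolding local_event_def lstate_le_def arbdel_local_def Let_def
  by (auto simp: image_iff) (rule exI, rule conjI[rotated], rule disjI1, assumption, auto)

lemma local_event_recv:
  "(j, i, m) \<in> N \<or> j \<in> F \<Longrightarrow> local_event F N i s (fst (recv_local j m s)) (snd (recv_local j m s))"
  by (auto simp: local_event_def lstate_le_def recv_local_def split: msg.splits)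

lemma local_inv_propose: "local_inv Qs i s \<Longrightarrow> local_inv Qs i (s\<lparr>ls_prop := True\<rparr>)"
  by (simp add: local_inv_def)

lemma local_inv_arbdel: "local_inv Qs i s \<Longrightarrow> local_inv Qs i (fst (arbdel_local j x s))"
  unfolding local_inv_def arbdel_local_def Let_def by (auto elim!: subset_trans)

lemma local_inv_recv: "local_inv Qs i s \<Longrightarrow> local_inv Qs i (fst (recv_local j m s))"
  by (cases m) (auto simp: local_inv_def recv_local_def elim: covered_mono)

section \<open>Single steps of AG\<close>

lemma do_local_sel [simp]:
  "g_loc (do_local Qs i \<sigma> r) = (g_loc \<sigma>)(i := settle_st Qs i (fst r))"
  "g_net (do_local Qs i \<sigma> r) = g_net \<sigma> \<union> sent_from i (snd r \<union> settle_out Qs i (fst r))"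
  by (auto simp: do_local_def Let_def sent_from_def)

lemma ag_step_cases:
  assumes "ag_step Qs F inp \<sigma> a \<sigma>'"
  obtains (idle) "\<sigma>' = \<sigma>"
  | (event) i ls out where "g_loc \<sigma>' = (g_loc \<sigma>)(i := settle_st Qs i ls)"
      "g_net \<sigma>' \<subseteq> g_net \<sigma> \<union> sent_from i (out \<union> settle_out Qs i ls)"
      "sent_from i (out \<union> settle_out Qs i ls) \<subseteq> g_net \<sigma>'"
      "local_event F (g_net \<sigma>) i (g_loc \<sigma> i) ls out"
      "local_inv Qs i (g_loc \<sigma> i) \<Longrightarrow> local_inv Qs i ls"
proof (cases a)
  case (Propose i)
  with assms have "\<sigma>' = do_local Qs i \<sigma> ((g_loc \<sigma> i)\<lparr>ls_prop := True\<rparr>, {})"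
    by (simp_all add: ag_step_def)
  then show thesis
    by (intro event[of i "(g_loc \<sigma> i)\<lparr>ls_prop := True\<rparr>" "{}"])
      (simp_all add: local_event_propose local_inv_propose)
next
  case (ArbDeliver i j x)
  with assms have "\<sigma>' = do_local Qs i \<sigma> (arbdel_local j x (g_loc \<sigma> i))"
    by (simp_all add: ag_step_def)
  then show thesis
    by (intro event[of i "fst (arbdel_local j x (g_loc \<sigma> i))" "snd (arbdel_local j x (g_loc \<sigma> i))"])
      (simp_all add: local_event_arbdel local_inv_arbdel)
next
  case (Receive j i m)
  with assms have "(j, i, m) \<in> g_net \<sigma>"
    "\<sigma>' = do_local Qs i (\<sigma>\<lparr>g_net := g_net \<sigma> - {(j, i, m)}\<rparr>) (recv_local j m (g_loc \<sigma> i))"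
    by (simp_all add: ag_step_def)
  then show thesis
    by (intro event[of i "fst (recv_local j m (g_loc \<sigma> i))" "snd (recv_local j m (g_loc \<sigma> i))"])
      (auto simp: local_event_recv local_inv_recv)
next
  case (ByzReceive j i m)
  with assms have "j \<in> F" "\<sigma>' = do_local Qs i \<sigma> (recv_local j m (g_loc \<sigma> i))"
    by (simp_all add: ag_step_def)
  then show thesis
    by (intro event[of i "fst (recv_local j m (g_loc \<sigma> i))" "snd (recv_local j m (g_loc \<sigma> i))"])
      (simp_all add: local_event_recv local_inv_recv)
next
  case Idle
  with assms show thesis
    by (intro idle) (simp add: ag_step_def)
qed

lemma ag_step_local_cases:
  assumes "ag_step Qs F inp \<sigma> a \<sigma>'"
  obtains (unchanged) "g_loc \<sigma>' k = g_loc \<sigma> k"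
  | (event) ls out where "g_loc \<sigma>' k = settle_st Qs k ls" "sent_from k out \<subseteq> g_net \<sigma>'"
      "sent_from k (settle_out Qs k ls) \<subseteq> g_net \<sigma>'" "local_event F (g_net \<sigma>) k (g_loc \<sigma> k) ls out"
  using assms
proof (cases rule: ag_step_cases)
  case idle
  then show thesis by (intro unchanged) simp
next
  case (event i ls out)
  then show thesis
    by (cases "k = i") (auto intro: that)
qed

lemma ag_step_sent:
  assumes "ag_step Qs F inp \<sigma> a \<sigma>'" "(j, k, m) \<in> g_net \<sigma>'" "(j, k, m) \<notin> g_net \<sigma>"
  obtains ls out where "g_loc \<sigma>' j = settle_st Qs j ls" "(k, m) \<in> out \<union> settle_out Qs j ls"
    "local_event F (g_net \<sigma>) j (g_loc \<sigma> j) ls out"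
  using assms(1)
proof (cases rule: ag_step_cases)
  case idle
  with assms(2,3) show thesis by simp
next
  case (event i ls out)
  with assms(2,3) have "j = i" "(k, m) \<in> out \<union> settle_out Qs i ls" by auto
  with event show thesis by (intro that) simp_all
qed

lemma ag_step_lstate_le:
  assumes "ag_step Qs F inp \<sigma> a \<sigma>'"
  shows "lstate_le (g_loc \<sigma> k) (g_loc \<sigma>' k)"
  using assms
proof (cases rule: ag_step_local_cases[of _ _ _ _ _ _ k])
  case unchanged
  then show ?thesis by (simp add: lstate_le_refl)
next
  case (event ls out)
  then show ?thesis
    by (metis local_eventD(1) lstate_le_settle_st lstate_le_trans)
qed

lemma ag_step_local_inv:
  assumes "ag_step Qs F inp \<sigma> a \<sigma>'" "local_inv Qs k (g_loc \<sigma> k)"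
  shows "local_inv Qs k (g_loc \<sigma>' k)"
  using assms(1)
proof (cases rule: ag_step_cases)
  case idle
  with assms(2) show ?thesis by simp
next
  case (event i ls out)
  with assms(2) show ?thesis by (cases "k = i") (simp_all add: local_inv_settle_st)
qed

lemma ag_step_settled:
  assumes "ag_step Qs F inp \<sigma> a \<sigma>'"
  shows "g_loc \<sigma>' k = g_loc \<sigma> k \<or> settle_st Qs k (g_loc \<sigma>' k) = g_loc \<sigma>' k"
  using assms by (cases rule: ag_step_cases) (auto simp: settle_st_idem)

lemma ag_step_receipts:
  assumes "ag_step Qs F inp \<sigma> a \<sigma>'"
  shows "(j, X) \<in> ls_pendS (g_loc \<sigma>' k) \<Longrightarrow>
      (j, X) \<in> ls_pendS (g_loc \<sigma> k) \<or> (j, k, DistS X) \<in> g_net \<sigma> \<or> j \<in> F"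
    and "j \<in> ls_acks (g_loc \<sigma>' k) \<Longrightarrow> j \<in> ls_acks (g_loc \<sigma> k) \<or> (j, k, Ack) \<in> g_net \<sigma> \<or> j \<in> F"
    and "j \<in> ls_readys (g_loc \<sigma>' k) \<Longrightarrow>
      j \<in> ls_readys (g_loc \<sigma> k) \<or> (j, k, Ready) \<in> g_net \<sigma> \<or> j \<in> F"
    and "j \<in> ls_confs (g_loc \<sigma>' k) \<Longrightarrow>
      j \<in> ls_confs (g_loc \<sigma> k) \<or> (j, k, Confirm) \<in> g_net \<sigma> \<or> j \<in> F"
  by (cases rule: ag_step_local_cases[OF assms, of k]; simp add: local_eventD)+

lemma ag_step_new_message:
  assumes "ag_step Qs F inp \<sigma> a \<sigma>'" "(j, k, m) \<in> g_net \<sigma>'" "(j, k, m) \<notin> g_net \<sigma>"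
  shows "m = DistS X \<Longrightarrow> ls_sentS (g_loc \<sigma>' j) = Some X"
    and "m = Ready \<Longrightarrow> ls_done5 (g_loc \<sigma>' j)"
    and "m = Confirm \<Longrightarrow> ls_done6 (g_loc \<sigma>' j) \<or> ls_done7 (g_loc \<sigma>' j)"
    and "m = Ack \<Longrightarrow> \<exists>X. X \<subseteq> ls_T (g_loc \<sigma>' j) \<and>
      ((k, X) \<in> ls_pendS (g_loc \<sigma> j) \<or> (k, j, DistS X) \<in> g_net \<sigma> \<or> k \<in> F)"
proof -
  obtain ls out where ls: "g_loc \<sigma>' j = settle_st Qs j ls" and
    sent: "(k, m) \<in> out \<union> settle_out Qs j ls" and ev: "local_event F (g_net \<sigma>) j (g_loc \<sigma> j) ls out"
    using assms by (rule ag_step_sent)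
  have out: "m = Ack \<and> (\<exists>X. X \<subseteq> ls_T ls \<and>
      ((k, X) \<in> ls_pendS (g_loc \<sigma> j) \<or> (k, j, DistS X) \<in> g_net \<sigma> \<or> k \<in> F))" if "(k, m) \<in> out"
    using local_eventD(13)[OF ev that] .
  show "m = DistS X \<Longrightarrow> ls_sentS (g_loc \<sigma>' j) = Some X"
    and "m = Ready \<Longrightarrow> ls_done5 (g_loc \<sigma>' j)"
    and "m = Confirm \<Longrightarrow> ls_done6 (g_loc \<sigma>' j) \<or> ls_done7 (g_loc \<sigma>' j)"
    using sent out settle_out_content[of k m Qs j ls] ls by auto
  show "m = Ack \<Longrightarrow> \<exists>X. X \<subseteq> ls_T (g_loc \<sigma>' j) \<and>
      ((k, X) \<in> ls_pendS (g_loc \<sigma> j) \<or> (k, j, DistS X) \<in> g_net \<sigma> \<or> k \<in> F)"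
    using sent out settle_out_content(2)[of k m Qs j ls] ls by auto
qed

lemma ag_step_broadcasts:
  assumes "ag_step Qs F inp \<sigma> a \<sigma>'"
  shows "ls_sentS (g_loc \<sigma> j) = None \<Longrightarrow> ls_sentS (g_loc \<sigma>' j) = Some X \<Longrightarrow>
      (j, k, DistS X) \<in> g_net \<sigma>'"
    and "\<not> ls_done5 (g_loc \<sigma> j) \<Longrightarrow> ls_done5 (g_loc \<sigma>' j) \<Longrightarrow> (j, k, Ready) \<in> g_net \<sigma>'"
    and "\<not> (ls_done6 (g_loc \<sigma> j) \<or> ls_done7 (g_loc \<sigma> j)) \<Longrightarrow>
      ls_done6 (g_loc \<sigma>' j) \<or> ls_done7 (g_loc \<sigma>' j) \<Longrightarrow> (j, k, Confirm) \<in> g_net \<sigma>'"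
    and "\<not> ls_sentT (g_loc \<sigma> j) \<Longrightarrow> ls_sentT (g_loc \<sigma>' j) \<Longrightarrow>
      (j, k, DistT (ls_T (g_loc \<sigma>' j))) \<in> g_net \<sigma>'"
proof -
  have event: "\<exists>ls. g_loc \<sigma>' j = settle_st Qs j ls \<and>
      (\<forall>m. (k, m) \<in> settle_out Qs j ls \<longrightarrow> (j, k, m) \<in> g_net \<sigma>') \<and>
      ls_sentS ls = ls_sentS (g_loc \<sigma> j) \<and> ls_done5 ls = ls_done5 (g_loc \<sigma> j) \<and>
      ls_done6 ls = ls_done6 (g_loc \<sigma> j) \<and> ls_done7 ls = ls_done7 (g_loc \<sigma> j) \<and>
      ls_sentT ls = ls_sentT (g_loc \<sigma> j)"
    if changed: "g_loc \<sigma>' j \<noteq> g_loc \<sigma> j"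
    using assms
  proof (cases rule: ag_step_local_cases[of _ _ _ _ _ _ j])
    case (event ls out)
    then show ?thesis
      by (intro exI[of _ ls]) (auto simp: local_eventD)
  qed (use changed in simp)
  show "ls_sentS (g_loc \<sigma> j) = None \<Longrightarrow> ls_sentS (g_loc \<sigma>' j) = Some X \<Longrightarrow>
      (j, k, DistS X) \<in> g_net \<sigma>'"
    using event settle_out_broadcasts(1)[of _ Qs j X k] by fastforce
  show "\<not> ls_done5 (g_loc \<sigma> j) \<Longrightarrow> ls_done5 (g_loc \<sigma>' j) \<Longrightarrow> (j, k, Ready) \<in> g_net \<sigma>'"
    using event settle_out_broadcasts(2)[of _ Qs j k] by fastforce
  show "\<not> (ls_done6 (g_loc \<sigma> j) \<or> ls_done7 (g_loc \<sigma> j)) \<Longrightarrow>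
      ls_done6 (g_loc \<sigma>' j) \<or> ls_done7 (g_loc \<sigma>' j) \<Longrightarrow> (j, k, Confirm) \<in> g_net \<sigma>'"
    using event settle_out_broadcasts(3)[of _ Qs j k] by fastforce
  show "\<not> ls_sentT (g_loc \<sigma> j) \<Longrightarrow> ls_sentT (g_loc \<sigma>' j) \<Longrightarrow>
      (j, k, DistT (ls_T (g_loc \<sigma>' j))) \<in> g_net \<sigma>'"
    using event settle_out_broadcasts(4)[of _ Qs j k] by fastforce
qed

lemma ag_step_pending:
  assumes "ag_step Qs F inp \<sigma> a \<sigma>'"
  shows "\<not> ls_sentT (g_loc \<sigma> k) \<Longrightarrow> (j, X) \<in> ls_pendS (g_loc \<sigma> k) \<Longrightarrow>
      (j, X) \<in> ls_pendS (g_loc \<sigma>' k) \<or> (k, j, Ack) \<in> g_net \<sigma>'"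
    and "(j, X) \<in> ls_pendT (g_loc \<sigma> k) \<Longrightarrow>
      (j, X) \<in> ls_pendT (g_loc \<sigma>' k) \<or> X \<subseteq> ls_U (g_loc \<sigma>' k)"
proof -
  show "(j, X) \<in> ls_pendS (g_loc \<sigma>' k) \<or> (k, j, Ack) \<in> g_net \<sigma>'"
    if "\<not> ls_sentT (g_loc \<sigma> k)" "(j, X) \<in> ls_pendS (g_loc \<sigma> k)"
    using assms
  proof (cases rule: ag_step_local_cases[of _ _ _ _ _ _ k])
    case (event ls out)
    with that have "(j, X) \<in> ls_pendS ls \<or> (j, Ack) \<in> out"
      using local_eventD(8) by metis
    moreover have "(k, j, Ack) \<in> g_net \<sigma>'" if "(j, Ack) \<in> out"
      using event(2) that by (meson mem_sent_from subsetD)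
    ultimately show ?thesis
      using event(1) by auto
  qed (use that in simp)
  show "(j, X) \<in> ls_pendT (g_loc \<sigma>' k) \<or> X \<subseteq> ls_U (g_loc \<sigma>' k)"
    if "(j, X) \<in> ls_pendT (g_loc \<sigma> k)"
    using assms
  proof (cases rule: ag_step_local_cases[of _ _ _ _ _ _ k])
    case (event ls out)
    then show ?thesis
      using local_eventD(7)[OF event(4) that] by simp
  qed (use that in simp)
qed

section \<open>Invariants of the network\<close>

definition distS_inv :: "'p set \<Rightarrow> ('p,'v) gstate \<Rightarrow> bool" where
  "distS_inv F \<sigma> \<longleftrightarrow> (\<forall>j k X. j \<notin> F \<longrightarrow>
     (j, k, DistS X) \<in> g_net \<sigma> \<or> (j, X) \<in> ls_pendS (g_loc \<sigma> k) \<longrightarrow> ls_sentS (g_loc \<sigma> j) = Some X)"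

definition ack_inv :: "'p set \<Rightarrow> ('p,'v) gstate \<Rightarrow> bool" where
  "ack_inv F \<sigma> \<longleftrightarrow> (\<forall>j k. j \<notin> F \<longrightarrow> k \<notin> F \<longrightarrow>
     (j, k, Ack) \<in> g_net \<sigma> \<or> j \<in> ls_acks (g_loc \<sigma> k) \<longrightarrow>
     (\<exists>Y. ls_sentS (g_loc \<sigma> k) = Some Y \<and> Y \<subseteq> ls_T (g_loc \<sigma> j)))"

definition ready_inv :: "'p set \<Rightarrow> ('p,'v) gstate \<Rightarrow> bool" where
  "ready_inv F \<sigma> \<longleftrightarrow> (\<forall>j k. j \<notin> F \<longrightarrow>
     (j, k, Ready) \<in> g_net \<sigma> \<or> j \<in> ls_readys (g_loc \<sigma> k) \<longrightarrow> ls_done5 (g_loc \<sigma> j))"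

definition confirm_inv :: "'p set \<Rightarrow> ('p,'v) gstate \<Rightarrow> bool" where
  "confirm_inv F \<sigma> \<longleftrightarrow> (\<forall>j k. j \<notin> F \<longrightarrow>
     (j, k, Confirm) \<in> g_net \<sigma> \<or> j \<in> ls_confs (g_loc \<sigma> k) \<longrightarrow>
     ls_done6 (g_loc \<sigma> j) \<or> ls_done7 (g_loc \<sigma> j))"

lemma distS_inv_step:
  assumes step: "ag_step Qs F inp \<sigma> a \<sigma>'" and inv: "distS_inv F \<sigma>"
  shows "distS_inv F \<sigma>'"
  unfolding distS_inv_def
proof (intro allI impI)
  fix j k X
  assume j: "j \<notin> F" and msg: "(j, k, DistS X) \<in> g_net \<sigma>' \<or> (j, X) \<in> ls_pendS (g_loc \<sigma>' k)"
  have "ls_sentS (g_loc \<sigma> j) = Some X \<or> ls_sentS (g_loc \<sigma>' j) = Some X"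
    using msg ag_step_new_message(1)[OF step] ag_step_receipts(1)[OF step] inv j
    unfolding distS_inv_def by blast
  then show "ls_sentS (g_loc \<sigma>' j) = Some X"
    using lstate_leD(2)[OF ag_step_lstate_le[OF step]] by blast
qed

lemma ack_inv_step:
  assumes step: "ag_step Qs F inp \<sigma> a \<sigma>'" and inv: "ack_inv F \<sigma>" "distS_inv F \<sigma>"
  shows "ack_inv F \<sigma>'"
  unfolding ack_inv_def
proof (intro allI impI)
  fix j k
  assume j: "j \<notin> F" and k: "k \<notin> F" and msg: "(j, k, Ack) \<in> g_net \<sigma>' \<or> j \<in> ls_acks (g_loc \<sigma>' k)"
  have mono: "lstate_le (g_loc \<sigma> p) (g_loc \<sigma>' p)" for p
    by (rule ag_step_lstate_le[OF step])
  have "\<exists>Y. ls_sentS (g_loc \<sigma> k) = Some Y \<and> Y \<subseteq> ls_T (g_loc \<sigma>' j)"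
  proof (cases "(j, k, Ack) \<in> g_net \<sigma> \<or> j \<in> ls_acks (g_loc \<sigma> k)")
    case True
    with inv(1) j k obtain Y where "ls_sentS (g_loc \<sigma> k) = Some Y" "Y \<subseteq> ls_T (g_loc \<sigma> j)"
      unfolding ack_inv_def by blast
    with lstate_leD(1)[OF mono[of j]] show ?thesis
      by blast
  next
    case False
    with msg ag_step_receipts(2)[OF step, of j k] j have "(j, k, Ack) \<in> g_net \<sigma>'" "(j, k, Ack) \<notin> g_net \<sigma>"
      by auto
    from ag_step_new_message(4)[OF step this] obtain X where "X \<subseteq> ls_T (g_loc \<sigma>' j)"
      "(k, X) \<in> ls_pendS (g_loc \<sigma> j) \<or> (k, j, DistS X) \<in> g_net \<sigma>"
      using k by blast
    with inv(2) k show ?thesis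
      unfolding distS_inv_def by blast
  qed
  then show "\<exists>Y. ls_sentS (g_loc \<sigma>' k) = Some Y \<and> Y \<subseteq> ls_T (g_loc \<sigma>' j)"
    using lstate_leD(2)[OF mono[of k]] by blast
qed

lemma ready_inv_step:
  assumes step: "ag_step Qs F inp \<sigma> a \<sigma>'" and inv: "ready_inv F \<sigma>"
  shows "ready_inv F \<sigma>'"
  unfolding ready_inv_def
proof (intro allI impI)
  fix j k
  assume j: "j \<notin> F" and msg: "(j, k, Ready) \<in> g_net \<sigma>' \<or> j \<in> ls_readys (g_loc \<sigma>' k)"
  have "ls_done5 (g_loc \<sigma> j) \<or> ls_done5 (g_loc \<sigma>' j)"
    using msg ag_step_new_message(2)[OF step] ag_step_receipts(3)[OF step] inv j
    unfolding ready_inv_def by blast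
  then show "ls_done5 (g_loc \<sigma>' j)"
    using lstate_leD(4)[OF ag_step_lstate_le[OF step]] by blast
qed

lemma confirm_inv_step:
  assumes step: "ag_step Qs F inp \<sigma> a \<sigma>'" and inv: "confirm_inv F \<sigma>"
  shows "confirm_inv F \<sigma>'"
  unfolding confirm_inv_def
proof (intro allI impI)
  fix j k
  assume j: "j \<notin> F" and msg: "(j, k, Confirm) \<in> g_net \<sigma>' \<or> j \<in> ls_confs (g_loc \<sigma>' k)"
  have "ls_done6 (g_loc \<sigma> j) \<or> ls_done7 (g_loc \<sigma> j) \<or> ls_done6 (g_loc \<sigma>' j) \<or> ls_done7 (g_loc \<sigma>' j)"
    using msg ag_step_new_message(3)[OF step] ag_step_receipts(4)[OF step] inv j
    unfolding confirm_inv_def by blast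
  then show "ls_done6 (g_loc \<sigma>' j) \<or> ls_done7 (g_loc \<sigma>' j)"
    using lstate_leD(5)[OF ag_step_lstate_le[OF step]] by blast
qed

lemma net_invariants_init: "distS_inv F init_g \<and> ack_inv F init_g \<and> ready_inv F init_g \<and> confirm_inv F init_g"
  by (simp add: distS_inv_def ack_inv_def ready_inv_def confirm_inv_def init_g_def init_l_def)

section \<open>Executions\<close>

locale ag_run =
  fixes Fp Qs :: "'p::finite \<Rightarrow> 'p set set" and F :: "'p set" and inp :: "'p \<Rightarrow> 'v"
    and \<sigma> :: "nat \<Rightarrow> ('p,'v) gstate" and lab :: "nat \<Rightarrow> ('p,'v) label"
  assumes quorum_system: "asym_quorum_system Fp Qs"
    and execution: "AG_execution Fp Qs F inp \<sigma> lab"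
    and guild_exists: "exec_with_guild Fp Qs F"
begin

abbreviation loc :: "nat \<Rightarrow> 'p \<Rightarrow> ('p,'v) lstate" where
  "loc t k \<equiv> g_loc (\<sigma> t) k"

abbreviation net :: "nat \<Rightarrow> ('p \<times> 'p \<times> ('p,'v) msg) set" where
  "net t \<equiv> g_net (\<sigma> t)"

abbreviation G :: "'p set" where
  "G \<equiv> Gmax Fp Qs F"

lemma run_step: "ag_step Qs F inp (\<sigma> t) (lab t) (\<sigma> (Suc t))"
  using execution by (simp add: AG_execution_def)

lemma loc_0: "loc 0 k = init_l"
  using execution by (simp add: AG_execution_def init_g_def)

lemma proposes_eventually: "j \<notin> F \<Longrightarrow> \<exists>t. ls_prop (loc t j)"
proof -
  assume "j \<notin> F"
  moreover have "\<forall>i. i \<notin> F \<longrightarrow> (\<exists>t. lab t = Propose i)"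
    using execution by (simp add: AG_execution_def)
  ultimately obtain t where "lab t = Propose j"
    by blast
  with run_step[of t] have "ls_prop (loc (Suc t) j)"
    by (simp add: ag_step_def)
  then show ?thesis ..
qed

lemma receive_eventually:
  assumes "(j, k, m) \<in> net t" "k \<notin> F"
  obtains t' where "loc (Suc t') k = settle_st Qs k (fst (recv_local j m (loc t' k)))"
    "sent_from k (snd (recv_local j m (loc t' k))) \<subseteq> net (Suc t')"
proof -
  have "\<forall>t j k m. (j, k, m) \<in> net t \<and> k \<notin> F \<longrightarrow> (\<exists>t'\<ge>t. lab t' = Receive j k m)"
    using execution by (simp add: AG_execution_def)
  with assms obtain t' where "lab t' = Receive j k m"
    by blast
  with run_step[of t'] show thesis
    by (intro that[of t']) (auto simp: ag_step_def)
qed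

lemma arb_validity: "j \<notin> F \<Longrightarrow> ls_prop (loc t j) \<Longrightarrow> k \<in> G \<Longrightarrow> \<exists>t'. (j, inp j) \<in> ls_S (loc t' k)"
  using execution unfolding AG_execution_def by (elim conjE) blast

lemma arb_agreement:
  "i \<in> G \<Longrightarrow> k \<in> G \<Longrightarrow> (j, x) \<in> ls_S (loc t i) \<Longrightarrow> (j, y) \<in> ls_S (loc t' k) \<Longrightarrow> x = y"
  using execution unfolding AG_execution_def by (elim conjE) blast

lemma arb_totality: "i \<in> G \<Longrightarrow> (j, x) \<in> ls_S (loc t i) \<Longrightarrow> k \<in> G \<Longrightarrow> \<exists>t' y. (j, y) \<in> ls_S (loc t' k)"
  using execution unfolding AG_execution_def by (elim conjE) meson

lemma loc_mono: "t \<le> t' \<Longrightarrow> lstate_le (loc t k) (loc t' k)"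
  by (induction t' rule: dec_induct)
    (auto intro: lstate_le_refl lstate_le_trans ag_step_lstate_le[OF run_step])

lemma loc_subset_mono:
  assumes "t \<le> t'"
  shows "ls_S (loc t k) \<subseteq> ls_S (loc t' k)" "ls_U (loc t k) \<subseteq> ls_U (loc t' k)"
    "ls_acks (loc t k) \<subseteq> ls_acks (loc t' k)" "ls_readys (loc t k) \<subseteq> ls_readys (loc t' k)"
    "ls_confs (loc t k) \<subseteq> ls_confs (loc t' k)"
  using loc_mono[OF assms] by (simp_all add: lstate_le_def)

lemma T_frozen_after_sentT:
  assumes "ls_sentT (loc t' j)"
  shows "ls_T (loc t j) \<subseteq> ls_T (loc t' j)"
proof (cases "t \<le> t'")
  case True
  then show ?thesis by (rule lstate_leD(1)[OF loc_mono])
next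
  case False
  then have "lstate_le (loc t' j) (loc t j)" by (simp add: loc_mono)
  with assms show ?thesis by (simp add: lstate_leD(3))
qed

lemma local_inv_loc: "local_inv Qs k (loc t k)"
  by (induction t) (simp_all add: loc_0 local_inv_init ag_step_local_inv[OF run_step])

lemma loc_T_subset_S: "ls_T (loc t k) \<subseteq> ls_S (loc t k)"
  using local_inv_loc unfolding local_inv_def by blast

lemma loc_sentS_subset_S: "ls_sentS (loc t k) = Some X \<Longrightarrow> X \<subseteq> ls_S (loc t k)"
  using local_inv_loc unfolding local_inv_def by blast

lemma loc_pendS_not_subset_S: "(j, X) \<in> ls_pendS (loc t k) \<Longrightarrow> \<not> X \<subseteq> ls_S (loc t k)"
  using local_inv_loc unfolding local_inv_def by blast

lemma loc_pendT_not_subset_S: "(j, X) \<in> ls_pendT (loc t k) \<Longrightarrow> \<not> X \<subseteq> ls_S (loc t k)"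
  using local_inv_loc unfolding local_inv_def by blast

lemma loc_done5_acks: "ls_done5 (loc t k) \<Longrightarrow> \<exists>Q\<in>Qs k. Q \<subseteq> ls_acks (loc t k)"
  using local_inv_loc unfolding local_inv_def covered_def by blast

lemma loc_done6_readys: "ls_done6 (loc t k) \<Longrightarrow> \<exists>Q\<in>Qs k. Q \<subseteq> ls_readys (loc t k)"
  using local_inv_loc unfolding local_inv_def covered_def by blast

lemma loc_done7_kernel: "ls_done7 (loc t k) \<Longrightarrow> \<exists>K. is_kernel Qs k K \<and> K \<subseteq> ls_confs (loc t k)"
  using local_inv_loc unfolding local_inv_def by blast

lemma loc_sentT_confs: "ls_sentT (loc t k) \<Longrightarrow> \<exists>Q\<in>Qs k. Q \<subseteq> ls_confs (loc t k)"
  using local_inv_loc unfolding local_inv_def covered_def by blast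

lemma net_invariants: "distS_inv F (\<sigma> t) \<and> ack_inv F (\<sigma> t) \<and> ready_inv F (\<sigma> t) \<and> confirm_inv F (\<sigma> t)"
proof (induction t)
  case 0
  show ?case
    using execution net_invariants_init by (simp add: AG_execution_def)
next
  case (Suc t)
  then show ?case
    using distS_inv_step[OF run_step] ack_inv_step[OF run_step] ready_inv_step[OF run_step]
      confirm_inv_step[OF run_step] by blast
qed

lemma ack_sender_T:
  "j \<notin> F \<Longrightarrow> k \<notin> F \<Longrightarrow> j \<in> ls_acks (loc t k) \<Longrightarrow>
     \<exists>Y. ls_sentS (loc t k) = Some Y \<and> Y \<subseteq> ls_T (loc t j)"
  using net_invariants unfolding ack_inv_def by blast

lemma ready_sender_done5: "j \<notin> F \<Longrightarrow> j \<in> ls_readys (loc t k) \<Longrightarrow> ls_done5 (loc t j)"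
  using net_invariants unfolding ready_inv_def by blast

lemma confirm_sender_done:
  "j \<notin> F \<Longrightarrow> (j, k, Confirm) \<in> net t \<or> j \<in> ls_confs (loc t k) \<Longrightarrow>
     ls_done6 (loc t j) \<or> ls_done7 (loc t j)"
  using net_invariants unfolding confirm_inv_def by blast

lemma G_wise: "k \<in> G \<Longrightarrow> wise Fp F k"
  using guild_Gmax[of Fp Qs F] unfolding guild_def by blast

lemma G_correct: "k \<in> G \<Longrightarrow> k \<notin> F"
  using G_wise by (simp add: wise_def)

lemma G_quorum:
  assumes "k \<in> G"
  obtains Q where "Q \<in> Qs k" "Q \<subseteq> G"
  using guild_Gmax[of Fp Qs F] assms unfolding guild_def by blast

lemma G_nonempty: "G \<noteq> {}"
  using guild_exists unfolding exec_with_guild_def Gmax_def by blast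

lemma G_quorums_meet:
  assumes "k \<in> G" "l \<in> G" "Q \<in> Qs k" "Q' \<in> Qs l"
  obtains p where "p \<in> Q" "p \<in> Q'" "p \<notin> F"
  using wise_quorums_meet_correct[OF quorum_system G_wise G_wise] assms by metis

text \<open>Guarded actions only fire after an event, so the initial state is settled only because
  a guild member has quorums and none of them is empty.\<close>

lemma G_settled:
  assumes "k \<in> G"
  shows "settle_st Qs k (loc t k) = loc t k"
proof (induction t)
  case 0
  obtain Q where Q: "Q \<in> Qs k"
    using assms by (rule G_quorum)
  have "\<not> covered Qs k {}"
    using G_quorums_meet[OF assms assms] unfolding covered_def by (metis empty_iff subset_empty)
  moreover have "\<not> is_kernel Qs k {}"
    using Q unfolding is_kernel_def by blast
  ultimately show ?case
    by (simp add: loc_0 settle_st_def init_l_def)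
next
  case (Suc t)
  then show ?case
    using ag_step_settled[OF run_step, of t k] by auto
qed

lemma G_guards_fired:
  assumes "k \<in> G"
  shows "covered Qs k (fst ` ls_S (loc t k)) \<Longrightarrow> ls_sentS (loc t k) \<noteq> None"
    and "covered Qs k (ls_acks (loc t k)) \<Longrightarrow> ls_done5 (loc t k)"
    and "covered Qs k (ls_readys (loc t k)) \<Longrightarrow> ls_done6 (loc t k)"
    and "is_kernel Qs k K \<Longrightarrow> K \<subseteq> ls_confs (loc t k) \<Longrightarrow> ls_done7 (loc t k)"
    and "covered Qs k (ls_confs (loc t k)) \<Longrightarrow> ls_sentT (loc t k)"
  using arg_cong[OF G_settled[OF assms, of t], of ls_sentS]
    arg_cong[OF G_settled[OF assms, of t], of ls_done5]
    arg_cong[OF G_settled[OF assms, of t], of ls_done6]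
    arg_cong[OF G_settled[OF assms, of t], of ls_done7]
    arg_cong[OF G_settled[OF assms, of t], of ls_sentT]
  by (auto simp: settle_st_def split: if_splits)

section \<open>Progress\<close>

lemma broadcast_DistS:
  assumes "ls_sentS (loc t j) = Some X"
  shows "\<exists>t'. (j, k, DistS X) \<in> net t'"
proof -
  have "\<exists>m<t. ls_sentS (loc m j) = None \<and> ls_sentS (loc (Suc m) j) \<noteq> None"
    using ex_first_change_nat[of "\<lambda>m. ls_sentS (loc m j) \<noteq> None"] assms
    by (simp add: loc_0 init_l_def)
  then obtain m Y where m: "m < t" "ls_sentS (loc m j) = None" "ls_sentS (loc (Suc m) j) = Some Y"
    by blast
  have "ls_sentS (loc t j) = Some Y"
    using lstate_leD(2)[OF loc_mono[OF Suc_leI[OF m(1)]] m(3)] .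
  with assms m(2,3) show ?thesis
    using ag_step_broadcasts(1)[OF run_step, of m j] by auto
qed

lemma broadcast_Ready:
  assumes "ls_done5 (loc t j)"
  shows "\<exists>t'. (j, k, Ready) \<in> net t'"
proof -
  have "\<exists>m<t. \<not> ls_done5 (loc m j) \<and> ls_done5 (loc (Suc m) j)"
    using ex_first_change_nat[of "\<lambda>m. ls_done5 (loc m j)"] assms by (simp add: loc_0 init_l_def)
  then show ?thesis
    using ag_step_broadcasts(2)[OF run_step] by blast
qed

lemma broadcast_Confirm:
  assumes "ls_done6 (loc t j) \<or> ls_done7 (loc t j)"
  shows "\<exists>t'. (j, k, Confirm) \<in> net t'"
proof -
  have "\<exists>m<t. \<not> (ls_done6 (loc m j) \<or> ls_done7 (loc m j)) \<and>
      (ls_done6 (loc (Suc m) j) \<or> ls_done7 (loc (Suc m) j))"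
    using ex_first_change_nat[of "\<lambda>m. ls_done6 (loc m j) \<or> ls_done7 (loc m j)"] assms
    by (simp add: loc_0 init_l_def)
  then show ?thesis
    using ag_step_broadcasts(3)[OF run_step] by blast
qed

lemma broadcast_DistT:
  assumes "ls_sentT (loc t j)"
  shows "\<exists>t'. (j, k, DistT (ls_T (loc t j))) \<in> net t'"
proof -
  have "\<exists>m<t. \<not> ls_sentT (loc m j) \<and> ls_sentT (loc (Suc m) j)"
    using ex_first_change_nat[of "\<lambda>m. ls_sentT (loc m j)"] assms by (simp add: loc_0 init_l_def)
  then obtain m where m: "m < t" "\<not> ls_sentT (loc m j)" "ls_sentT (loc (Suc m) j)"
    by blast
  then have "ls_T (loc t j) = ls_T (loc (Suc m) j)"
    using lstate_leD(3)[OF loc_mono[OF Suc_leI[OF m(1)]]] by simp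
  with m show ?thesis
    using ag_step_broadcasts(4)[OF run_step] by metis
qed

lemma confirm_sent_before_received:
  assumes "j \<notin> F" "j \<in> ls_confs (loc t k)"
  shows "\<exists>t0<t. (j, k, Confirm) \<in> net t0"
proof -
  have "\<exists>m<t. j \<notin> ls_confs (loc m k) \<and> j \<in> ls_confs (loc (Suc m) k)"
    using ex_first_change_nat[of "\<lambda>m. j \<in> ls_confs (loc m k)"] assms(2) by (simp add: loc_0 init_l_def)
  then show ?thesis
    using ag_step_receipts(4)[OF run_step] assms(1) by blast
qed

lemma Ack_received:
  assumes "(j, k, Ack) \<in> net t" "k \<notin> F"
  shows "\<exists>t'. j \<in> ls_acks (loc t' k)"
proof -
  obtain t' where "loc (Suc t') k = settle_st Qs k (fst (recv_local j Ack (loc t' k)))"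
    using assms by (rule receive_eventually)
  then have "j \<in> ls_acks (loc (Suc t') k)"
    by (simp add: recv_local_def)
  then show ?thesis ..
qed

lemma Ready_received:
  assumes "ls_done5 (loc t j)" "k \<notin> F"
  shows "\<exists>t'. j \<in> ls_readys (loc t' k)"
proof -
  obtain t0 where "(j, k, Ready) \<in> net t0"
    using broadcast_Ready[OF assms(1)] by blast
  then obtain t' where "loc (Suc t') k = settle_st Qs k (fst (recv_local j Ready (loc t' k)))"
    using assms(2) by (rule receive_eventually)
  then have "j \<in> ls_readys (loc (Suc t') k)"
    by (simp add: recv_local_def)
  then show ?thesis ..
qed

lemma Confirm_received:
  assumes "ls_done6 (loc t j) \<or> ls_done7 (loc t j)" "k \<notin> F"
  shows "\<exists>t'. j \<in> ls_confs (loc t' k)"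
proof -
  obtain t0 where "(j, k, Confirm) \<in> net t0"
    using broadcast_Confirm[OF assms(1)] by blast
  then obtain t' where "loc (Suc t') k = settle_st Qs k (fst (recv_local j Confirm (loc t' k)))"
    using assms(2) by (rule receive_eventually)
  then have "j \<in> ls_confs (loc (Suc t') k)"
    by (simp add: recv_local_def)
  then show ?thesis ..
qed

lemma DistT_received:
  assumes "ls_sentT (loc t j)" "k \<notin> F"
  shows "\<exists>t'. ls_T (loc t j) \<subseteq> ls_U (loc t' k) \<or> (j, ls_T (loc t j)) \<in> ls_pendT (loc t' k)"
proof -
  obtain t0 where "(j, k, DistT (ls_T (loc t j))) \<in> net t0"
    using broadcast_DistT[OF assms(1)] by blast
  then obtain t' where
    "loc (Suc t') k = settle_st Qs k (fst (recv_local j (DistT (ls_T (loc t j))) (loc t' k)))"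
    using assms(2) by (rule receive_eventually)
  then have "ls_T (loc t j) \<subseteq> ls_U (loc (Suc t') k) \<or> (j, ls_T (loc t j)) \<in> ls_pendT (loc (Suc t') k)"
    by (simp add: recv_local_def)
  then show ?thesis ..
qed

lemma DistS_received:
  assumes "ls_sentS (loc t j) = Some X" "k \<notin> F" "\<forall>t. \<not> ls_sentT (loc t k)"
  shows "\<exists>t'. (k, j, Ack) \<in> net t' \<or> (j, X) \<in> ls_pendS (loc t' k)"
proof -
  obtain t0 where "(j, k, DistS X) \<in> net t0"
    using broadcast_DistS[OF assms(1)] by blast
  then obtain t' where
    "loc (Suc t') k = settle_st Qs k (fst (recv_local j (DistS X) (loc t' k)))"
    "sent_from k (snd (recv_local j (DistS X) (loc t' k))) \<subseteq> net (Suc t')"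
    using assms(2) by (rule receive_eventually)
  with assms(3) have "(k, j, Ack) \<in> net (Suc t') \<or> (j, X) \<in> ls_pendS (loc (Suc t') k)"
    by (auto simp: recv_local_def split: if_splits)
  then show ?thesis ..
qed

lemma pendS_until_Ack:
  assumes "t \<le> t'" "\<forall>t. \<not> ls_sentT (loc t k)" "(j, X) \<in> ls_pendS (loc t k)"
  shows "(j, X) \<in> ls_pendS (loc t' k) \<or> (\<exists>t0. (k, j, Ack) \<in> net t0)"
  using assms(1)
proof (induction t' rule: dec_induct)
  case base
  with assms(3) show ?case ..
next
  case (step n)
  with assms(2) ag_step_pending(1)[OF run_step[of n]] show ?case by blast
qed

lemma pendT_until_U:
  assumes "t \<le> t'" "X \<subseteq> ls_U (loc t k) \<or> (j, X) \<in> ls_pendT (loc t k)"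
  shows "X \<subseteq> ls_U (loc t' k) \<or> (j, X) \<in> ls_pendT (loc t' k)"
  using assms(1)
proof (induction t' rule: dec_induct)
  case base
  with assms(2) show ?case .
next
  case (step n)
  with ag_step_pending(2)[OF run_step[of n]] loc_subset_mono(2)[of n "Suc n" k] show ?case by auto
qed

lemma S_transfer:
  assumes "i \<in> G" "k \<in> G" "X \<subseteq> ls_S (loc t i)"
  shows "\<exists>t'. X \<subseteq> ls_S (loc t' k)"
proof -
  have "\<exists>n. \<forall>p\<in>fst ` X. \<exists>y. (p, y) \<in> ls_S (loc n k)"
  proof (rule ex_common_time_mono)
    show "\<exists>n y. (p, y) \<in> ls_S (loc n k)" if "p \<in> fst ` X" for p
      using that assms arb_totality by force
    show "\<exists>y. (p, y) \<in> ls_S (loc n k)" if "\<exists>y. (p, y) \<in> ls_S (loc m k)" "m \<le> n" for p m n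
      using that loc_subset_mono(1) by blast
  qed simp
  then obtain n where n: "\<forall>p\<in>fst ` X. \<exists>y. (p, y) \<in> ls_S (loc n k)" ..
  have "X \<subseteq> ls_S (loc n k)"
  proof
    fix z assume z: "z \<in> X"
    obtain p v where pv: "z = (p, v)" by fastforce
    with n z obtain y where y: "(p, y) \<in> ls_S (loc n k)" by force
    have "(p, v) \<in> ls_S (loc t i)" using assms(3) z pv by blast
    with y have "v = y" using arb_agreement[OF assms(1,2)] by blast
    with y pv show "z \<in> ls_S (loc n k)" by simp
  qed
  then show ?thesis ..
qed

lemma G_eventually_covered:
  assumes "i \<in> G" "\<And>j. j \<in> G \<Longrightarrow> \<exists>t. j \<in> A (loc t i)"
    "\<And>t t'. t \<le> t' \<Longrightarrow> A (loc t i) \<subseteq> A (loc t' i)"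
  shows "\<exists>t. covered Qs i (A (loc t i))"
proof -
  obtain Q where Q: "Q \<in> Qs i" "Q \<subseteq> G"
    using assms(1) by (rule G_quorum)
  have "\<exists>t. \<forall>j\<in>Q. j \<in> A (loc t i)"
  proof (rule ex_common_time_mono)
    show "\<exists>t. j \<in> A (loc t i)" if "j \<in> Q" for j
      using that Q(2) assms(2) by blast
    show "j \<in> A (loc t' i)" if "j \<in> A (loc t i)" "t \<le> t'" for j t t'
      using that assms(3) by blast
  qed simp
  with Q(1) show ?thesis
    unfolding covered_def by blast
qed

lemma G_sentS:
  assumes i: "i \<in> G"
  shows "\<exists>t X. ls_sentS (loc t i) = Some X"
proof -
  have "\<exists>t. covered Qs i (fst ` ls_S (loc t i))"
  proof (rule G_eventually_covered[OF i])
    fix j assume "j \<in> G"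
    with i obtain t where "(j, inp j) \<in> ls_S (loc t i)"
      using arb_validity proposes_eventually G_correct by metis
    then show "\<exists>t. j \<in> fst ` ls_S (loc t i)" by force
  qed (use loc_subset_mono(1) in blast)
  then show ?thesis
    using G_guards_fired(1)[OF i] by blast
qed

lemma G_acked_unless_sentT:
  assumes i: "i \<in> G" and j: "j \<in> G" and never: "\<forall>t. \<not> ls_sentT (loc t j)"
  shows "\<exists>t. j \<in> ls_acks (loc t i)"
proof -
  obtain t X where X: "ls_sentS (loc t i) = Some X"
    using G_sentS[OF i] by blast
  obtain t' where "(j, i, Ack) \<in> net t' \<or> (i, X) \<in> ls_pendS (loc t' j)"
    using DistS_received[OF X G_correct[OF j] never] by blast
  moreover have "\<exists>t0. (j, i, Ack) \<in> net t0" if pend: "(i, X) \<in> ls_pendS (loc t' j)"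
  proof -
    obtain n where "X \<subseteq> ls_S (loc n j)"
      using S_transfer[OF i j loc_sentS_subset_S[OF X]] by blast
    then have "X \<subseteq> ls_S (loc (max n t') j)"
      using loc_subset_mono(1)[of n "max n t'" j] by auto
    moreover have "(i, X) \<in> ls_pendS (loc (max n t') j) \<or> (\<exists>t0. (j, i, Ack) \<in> net t0)"
      using pendS_until_Ack[OF _ never pend] by simp
    ultimately show ?thesis
      using loc_pendS_not_subset_S by blast
  qed
  ultimately show ?thesis
    using Ack_received G_correct[OF i] by blast
qed

lemma ex_G_sentT: "\<exists>x\<in>G. \<exists>t. ls_sentT (loc t x)"
proof (rule ccontr)
  assume "\<not> ?thesis"
  then have never: "\<forall>t. \<not> ls_sentT (loc t x)" if "x \<in> G" for x
    using that by blast
  have done5: "\<exists>t. ls_done5 (loc t i)" if i: "i \<in> G" for i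
    using G_eventually_covered[OF i, of ls_acks] G_acked_unless_sentT[OF i _ never]
      loc_subset_mono(3) G_guards_fired(2)[OF i] by blast
  have done6: "\<exists>t. ls_done6 (loc t i)" if i: "i \<in> G" for i
    using G_eventually_covered[OF i, of ls_readys] done5 Ready_received G_correct[OF i]
      loc_subset_mono(4) G_guards_fired(3)[OF i] by blast
  have sentT: "\<exists>t. ls_sentT (loc t i)" if i: "i \<in> G" for i
    using G_eventually_covered[OF i, of ls_confs] done6 Confirm_received G_correct[OF i]
      loc_subset_mono(5) G_guards_fired(5)[OF i] by blast
  obtain x where "x \<in> G"
    using G_nonempty by blast
  with sentT never show False by blast
qed

lemma G_done7_if_sentT:
  assumes x: "x \<in> G" "ls_sentT (loc t x)" and k: "k \<in> G"
  shows "\<exists>t. ls_done7 (loc t k)"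
proof -
  obtain Q where Q: "Q \<in> Qs x" "Q \<subseteq> ls_confs (loc t x)"
    using loc_sentT_confs[OF x(2)] by blast
  have "\<exists>t'. \<forall>c\<in>Q - F. c \<in> ls_confs (loc t' k)"
  proof (rule ex_common_time_mono)
    show "\<exists>t'. c \<in> ls_confs (loc t' k)" if "c \<in> Q - F" for c
      using that Q(2) confirm_sender_done[of c x t] Confirm_received G_correct[OF k] by blast
    show "c \<in> ls_confs (loc t'' k)" if "c \<in> ls_confs (loc t' k)" "t' \<le> t''" for c t' t''
      using that loc_subset_mono(5) by blast
  qed simp
  moreover have "is_kernel Qs k (Q - F)"
    using wise_quorum_correct_part_is_kernel[OF quorum_system G_wise[OF x(1)] G_wise[OF k] Q(1)] .
  ultimately show ?thesis
    using G_guards_fired(4)[OF k] by blast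
qed

lemma G_sentT:
  assumes k: "k \<in> G"
  shows "\<exists>t. ls_sentT (loc t k)"
proof -
  obtain x t where x: "x \<in> G" "ls_sentT (loc t x)"
    using ex_G_sentT by blast
  have "\<exists>t. covered Qs k (ls_confs (loc t k))"
  proof (rule G_eventually_covered[OF k])
    fix j assume "j \<in> G"
    then obtain t' where "ls_done7 (loc t' j)"
      using G_done7_if_sentT[OF x] by blast
    then show "\<exists>t. j \<in> ls_confs (loc t k)"
      using Confirm_received G_correct[OF k] by blast
  qed (rule loc_subset_mono(5))
  then show ?thesis
    using G_guards_fired(5)[OF k] by blast
qed

lemma ready_before_first_confirm:
  assumes c: "c \<in> G" "ls_done6 (loc tc c) \<or> ls_done7 (loc tc c)"
    and first: "\<And>t g. t < tc \<Longrightarrow> g \<in> G \<Longrightarrow> \<not> (ls_done6 (loc t g) \<or> ls_done7 (loc t g))"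
  shows "\<exists>i\<in>G. ls_done5 (loc tc i)"
proof -
  obtain Qc where Qc: "Qc \<in> Qs c" "Qc \<subseteq> G"
    using c(1) by (rule G_quorum)
  show ?thesis
  proof (cases "ls_done6 (loc tc c)")
    case True
    then obtain Q where Q: "Q \<in> Qs c" "Q \<subseteq> ls_readys (loc tc c)"
      using loc_done6_readys by blast
    obtain g where "g \<in> Q" "g \<in> Qc" "g \<notin> F"
      using G_quorums_meet[OF c(1) c(1) Q(1) Qc(1)] .
    with Q(2) Qc(2) show ?thesis
      using ready_sender_done5 by blast
  next
    case False
    with c(2) obtain K where K: "is_kernel Qs c K" "K \<subseteq> ls_confs (loc tc c)"
      using loc_done7_kernel by blast
    then obtain g where g: "g \<in> K" "g \<in> Qc"
      using Qc(1) unfolding is_kernel_def by blast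
    with Qc(2) have gG: "g \<in> G" by blast
    with g(1) K(2) obtain t0 where "t0 < tc" "(g, c, Confirm) \<in> net t0"
      using confirm_sent_before_received G_correct by blast
    with gG show ?thesis
      using first confirm_sender_done G_correct by blast
  qed
qed

lemma ex_G_done5: "\<exists>i\<in>G. \<exists>t. ls_done5 (loc t i)"
proof -
  define confirmed where "confirmed t \<longleftrightarrow> (\<exists>c\<in>G. ls_done6 (loc t c) \<or> ls_done7 (loc t c))" for t
  obtain x t where x: "x \<in> G" "ls_sentT (loc t x)"
    using ex_G_sentT by blast
  then have "\<exists>t. confirmed t"
    using G_done7_if_sentT unfolding confirmed_def by blast
  define tc where "tc = (LEAST t. confirmed t)"
  have "confirmed tc"
    unfolding tc_def by (rule LeastI_ex) fact
  moreover have "\<not> (ls_done6 (loc t g) \<or> ls_done7 (loc t g))" if "t < tc" "g \<in> G" for t g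
    using not_less_Least[of t confirmed] that unfolding tc_def confirmed_def by blast
  ultimately show ?thesis
    using ready_before_first_confirm unfolding confirmed_def by blast
qed

lemma T_delivered:
  assumes j: "j \<in> G" and k: "k \<in> G" and sent: "ls_sentT (loc t j)"
  shows "\<exists>t'. \<forall>t''\<ge>t'. ls_T (loc t j) \<subseteq> ls_U (loc t'' k)"
proof -
  obtain t1 where t1: "ls_T (loc t j) \<subseteq> ls_U (loc t1 k) \<or> (j, ls_T (loc t j)) \<in> ls_pendT (loc t1 k)"
    using DistT_received[OF sent G_correct[OF k]] by blast
  obtain n where n: "ls_T (loc t j) \<subseteq> ls_S (loc n k)"
    using S_transfer[OF j k loc_T_subset_S] by blast
  have "ls_T (loc t j) \<subseteq> ls_U (loc t'' k)" if "max n t1 \<le> t''" for t''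
  proof -
    have "ls_T (loc t j) \<subseteq> ls_U (loc t'' k) \<or> (j, ls_T (loc t j)) \<in> ls_pendT (loc t'' k)"
      using pendT_until_U[OF _ t1] that by simp
    moreover have "ls_T (loc t j) \<subseteq> ls_S (loc t'' k)"
      using n loc_subset_mono(1)[of n t'' k] that by auto
    ultimately show ?thesis
      using loc_pendT_not_subset_S by blast
  qed
  then show ?thesis by blast
qed

lemma acked_sentS_delivered:
  assumes i: "i \<in> G" and Q: "Q \<in> Qs i" "Q \<subseteq> ls_acks (loc t i)"
    and Si: "ls_sentS (loc t i) = Some Si" and k: "k \<in> G"
  shows "\<exists>t'. \<forall>t''\<ge>t'. Si \<subseteq> ls_U (loc t'' k)"
proof -
  obtain Qk where Qk: "Qk \<in> Qs k" "Qk \<subseteq> G"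
    using k by (rule G_quorum)
  obtain j where j: "j \<in> Q" "j \<in> Qk" "j \<notin> F"
    using G_quorums_meet[OF i k Q(1) Qk(1)] .
  with Qk(2) have jG: "j \<in> G" by blast
  have "Si \<subseteq> ls_T (loc t j)"
    using ack_sender_T[OF j(3) G_correct[OF i]] j(1) Q(2) Si by force
  moreover obtain tj where tj: "ls_sentT (loc tj j)"
    using G_sentT[OF jG] by blast
  ultimately have "Si \<subseteq> ls_T (loc tj j)"
    using T_frozen_after_sentT by blast
  then show ?thesis
    using T_delivered[OF jG k tj] by blast
qed

theorem ex_G_sentS_delivered:
  "\<exists>i\<in>G. \<exists>t Si. ls_sentS (loc t i) = Some Si \<and> (\<forall>k\<in>G. \<exists>t'. \<forall>t''\<ge>t'. Si \<subseteq> ls_U (loc t'' k))"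
proof -
  obtain i t where i: "i \<in> G" "ls_done5 (loc t i)"
    using ex_G_done5 by blast
  obtain Q where Q: "Q \<in> Qs i" "Q \<subseteq> ls_acks (loc t i)"
    using loc_done5_acks[OF i(2)] by blast
  obtain j where "j \<in> Q" "j \<notin> F"
    using G_quorums_meet[OF i(1) i(1) Q(1) Q(1)] .
  with Q(2) obtain Si where Si: "ls_sentS (loc t i) = Some Si"
    using ack_sender_T G_correct[OF i(1)] by blast
  show ?thesis
    using acked_sentS_delivered[OF i(1) Q Si] i(1) Si by blast
qed

end

theorem lemma3p7:
  fixes Fp Qs :: "'p::finite \<Rightarrow> 'p set set"
    and F :: "'p set"
    and inp :: "'p \<Rightarrow> 'v"
    and \<sigma> :: "nat \<Rightarrow> ('p,'v) gstate"
    and lab :: "nat \<Rightarrow> ('p,'v) label"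
  assumes "asym_quorum_system Fp Qs"
    and "AG_execution Fp Qs F inp \<sigma> lab"
    and "exec_with_guild Fp Qs F"
  shows "\<exists>i\<in>Gmax Fp Qs F. \<exists>t Si. ls_sentS (g_loc (\<sigma> t) i) = Some Si \<and>
           (\<forall>k\<in>Gmax Fp Qs F. \<exists>t'. \<forall>t''\<ge>t'. Si \<subseteq> ls_U (g_loc (\<sigma> t'') k))"
proof -
  interpret ag_run Fp Qs F inp \<sigma> lab
    using assms by unfold_locales
  show ?thesis
    by (rule ex_G_sentS_delivered)
qed

end
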